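(* Let $n\ge 3$, let $\mathbf{p}\in\mathbb{Q}^{n!}$ be any profile, and write $Q_{\mathbf{p}}=\sum_{\ell=1}^{n!}p_\ell R_\ell$ in column form as $Q_{\mathbf{p}}=[\mathbf{q}_1\ \cdots\ \mathbf{q}_n]$. Define $\mathbf{t}_k=\sum_{j=1}^{k}\mathbf{q}_j$ for $k=1,\dots,n-1$. Then a face $G$ of the braid arrangement is a possible outcome for a positional voting procedure with input $\mathbf{p}$ (i.e. there is a nonzero $\mathbf{w}\in\overline{W}$ with $Q_{\mathbf{p}}\mathbf{w}\in G$) if and only if $G$ intersects the convex hull of $\mathbf{t}_1,\dots,\mathbf{t}_{n-1}$.
   Context: Work over $\mathbb{Q}$. Label the permutations of $S_n$ as $\sigma_1,\dots,\sigma_{n!}$ (lexicographically in one-line notation), where $\sigma_\ell$ is the ranking in which candidate $\sigma_\ell(k)$ is placed $k$-th; $p_\ell$ is the number of voters with preference $\sigma_\ell$. $R_\ell$ is the $n\times n$ permutation matrix with $R_\ell(i,j)=1$ iff $\sigma_\ell(j)=i$, so $Q_{\mathbf{p}}(i,j)$ is the number of voters ranking candidate $i$ in position $j$. $\overline{W}=\{\mathbf{x}\in\mathbb{Q}^n : x_1\ge\cdots\ge x_n,\ x_1+\cdots+x_n=0\}$ is the set of weighting vectors; using $\mathbf{w}$, the results vector is $Q_{\mathbf{p}}\mathbf{w}$. The faces of the braid arrangement are the equivalence classes of $\mathbb{Q}^n$ under the relation: $\mathbf{x}\sim\mathbf{y}$ iff for all $i,j$, $x_i>x_j\iff y_i>y_j$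 and $x_i=x_j\iff y_i=y_j$ (equivalently, faces correspond to ordered set partitions of the candidates, i.e. rankings with ties). *)

theory Defs
  imports Complex_Main "HOL-Combinatorics.Permutations"
begin

text \<open>Candidates and positions are indexed 0..n-1. Vectors in Q^n are functions
nat => rat vanishing outside {0..<n}. A ranking sigma places candidate sigma k in
position k; the rankings are the permutations of {0..<n}. A profile assigns to each
ranking a rational number of voters (values outside the permutations are irrelevant).\<close>

definition vecs :: "nat \<Rightarrow> (nat \<Rightarrow> rat) set" where
  "vecs n = {x. \<forall>i\<ge>n. x i = 0}"

definition rankings :: "nat \<Rightarrow> (nat \<Rightarrow> nat) set" where
  "rankings n = {\<sigma>. \<sigma> permutes {0..<n}}"

definition perm_mat :: "(nat \<Rightarrow> nat) \<Rightarrow> nat \<Rightarrow> nat \<Rightarrow> rat" where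
  "perm_mat \<sigma> i j = (if \<sigma> j = i then 1 else 0)"

definition Qmat :: "nat \<Rightarrow> ((nat \<Rightarrow> nat) \<Rightarrow> rat) \<Rightarrow> nat \<Rightarrow> nat \<Rightarrow> rat" where
  "Qmat n p i j = (\<Sum>\<sigma>\<in>rankings n. p \<sigma> * perm_mat \<sigma> i j)"

definition mat_vec :: "nat \<Rightarrow> (nat \<Rightarrow> nat \<Rightarrow> rat) \<Rightarrow> (nat \<Rightarrow> rat) \<Rightarrow> nat \<Rightarrow> rat" where
  "mat_vec n A w = (\<lambda>i. if i < n then (\<Sum>j<n. A i j * w j) else 0)"

definition qcol :: "nat \<Rightarrow> ((nat \<Rightarrow> nat) \<Rightarrow> rat) \<Rightarrow> nat \<Rightarrow> nat \<Rightarrow> rat" where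
  "qcol n p j = (\<lambda>i. if i < n then Qmat n p i j else 0)"

text \<open>t_k = q_1 + ... + q_k (1-based), i.e. sum of the first k columns.\<close>
definition tvec :: "nat \<Rightarrow> ((nat \<Rightarrow> nat) \<Rightarrow> rat) \<Rightarrow> nat \<Rightarrow> nat \<Rightarrow> rat" where
  "tvec n p k = (\<lambda>i. \<Sum>j<k. qcol n p j i)"

definition Wbar :: "nat \<Rightarrow> (nat \<Rightarrow> rat) set" where
  "Wbar n = {x \<in> vecs n. (\<forall>i j. i \<le> j \<longrightarrow> j < n \<longrightarrow> x j \<le> x i) \<and> (\<Sum>i<n. x i) = 0}"

definition braid_equiv :: "nat \<Rightarrow> (nat \<Rightarrow> rat) \<Rightarrow> (nat \<Rightarrow> rat) \<Rightarrow> bool" where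
  "braid_equiv n x y \<longleftrightarrow> (\<forall>i<n. \<forall>j<n. (x i > x j \<longleftrightarrow> y i > y j) \<and> (x i = x j \<longleftrightarrow> y i = y j))"

definition braid_face :: "nat \<Rightarrow> (nat \<Rightarrow> rat) set \<Rightarrow> bool" where
  "braid_face n G \<longleftrightarrow> (\<exists>x\<in>vecs n. G = {y \<in> vecs n. braid_equiv n x y})"

definition rat_convex_hull :: "nat set \<Rightarrow> (nat \<Rightarrow> nat \<Rightarrow> rat) \<Rightarrow> (nat \<Rightarrow> rat) set" where
  "rat_convex_hull K v = {(\<lambda>i. \<Sum>k\<in>K. c k * v k i) | c. (\<forall>k\<in>K. 0 \<le> c k) \<and> (\<Sum>k\<in>K. c k) = 1}"

definition possible_outcome :: "nat \<Rightarrow> ((nat \<Rightarrow> nat) \<Rightarrow> rat) \<Rightarrow> (nat \<Rightarrow> rat) set \<Rightarrow> bool" where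
  "possible_outcome n p G \<longleftrightarrow>
     (\<exists>w\<in>Wbar n. w \<noteq> (\<lambda>_. 0) \<and> mat_vec n (Qmat n p) w \<in> G)"

end

theory Submission
  imports Defs
begin

text \<open>By Abel summation, row i of Q w equals w_n times the number of voters plus
  the sum over k of (w_k - w_(k+1)) times the i-th entry of t_k. For a nonzero weighting
  vector the gaps w_k - w_(k+1) are nonnegative with positive sum w_1 - w_n, so Q w is a
  positive multiple of a point of the convex hull of the t_k, shifted along the all-ones
  vector; conversely any convex combination is produced by the centred weighting vector
  with the prescribed gaps. Faces of the braid arrangement are invariant under positive
  scaling and such shifts.\<close>

lemma abel_summation_lessThan_Suc:
  fixes f w :: "nat \<Rightarrow> 'a::comm_ring_1"
  shows "(\<Sum>j<Suc m. f j * w j)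
           = w m * (\<Sum>j<Suc m. f j) + (\<Sum>k\<in>{1..m}. (w (k-1) - w k) * (\<Sum>j<k. f j))"
proof (induction m)
  case 0
  show ?case by simp
next
  case (Suc m)
  have "(\<Sum>j<Suc (Suc m). f j * w j) = (\<Sum>j<Suc m. f j * w j) + f (Suc m) * w (Suc m)"
    by simp
  also have "\<dots> = w m * (\<Sum>j<Suc m. f j) + (\<Sum>k\<in>{1..m}. (w (k-1) - w k) * (\<Sum>j<k. f j))
                  + f (Suc m) * w (Suc m)"
    by (simp only: Suc.IH)
  also have "\<dots> = w (Suc m) * (\<Sum>j<Suc (Suc m). f j)
                  + (\<Sum>k\<in>{1..Suc m}. (w (k-1) - w k) * (\<Sum>j<k. f j))"
    by (simp add: algebra_simps)
  finally show ?case .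
qed

lemma sum_gaps_telescope:
  fixes w :: "nat \<Rightarrow> 'a::ab_group_add"
  shows "(\<Sum>k\<in>{1..m}. w (k-1) - w k) = w 0 - w m"
  by (induction m) (auto simp: atLeastAtMostSuc_conv)

lemma Qmat_row_sum:
  assumes "i < n"
  shows "(\<Sum>j<n. Qmat n p i j) = (\<Sum>\<sigma>\<in>rankings n. p \<sigma>)"
proof -
  have "(\<Sum>j<n. perm_mat \<sigma> i j) = 1" if "\<sigma> \<in> rankings n" for \<sigma>
  proof -
    have \<sigma>: "\<sigma> permutes {0..<n}" using that by (simp add: rankings_def)
    have "(\<Sum>j<n. perm_mat \<sigma> i j) = (\<Sum>j<n. if j = inv \<sigma> i then 1 else 0)"
      unfolding perm_mat_def by (metis permutes_inv_eq[OF \<sigma>])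
    moreover have "inv \<sigma> i < n"
      using permutes_in_image[OF permutes_inv[OF \<sigma>]] assms by auto
    ultimately show ?thesis by simp
  qed
  moreover have "(\<Sum>j<n. Qmat n p i j) = (\<Sum>\<sigma>\<in>rankings n. p \<sigma> * (\<Sum>j<n. perm_mat \<sigma> i j))"
    unfolding Qmat_def sum_distrib_left by (rule sum.swap)
  ultimately show ?thesis by simp
qed

lemma mat_vec_Qmat_eq_gap_combination:
  assumes "i < n"
  shows "mat_vec n (Qmat n p) w i
           = w (n-1) * (\<Sum>\<sigma>\<in>rankings n. p \<sigma>) + (\<Sum>k\<in>{1..n-1}. (w (k-1) - w k) * tvec n p k i)"
proof -
  have n: "n = Suc (n-1)" using assms by simp
  have "mat_vec n (Qmat n p) w i = (\<Sum>j<Suc (n-1). Qmat n p i j * w j)"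
    unfolding mat_vec_def using assms n by simp
  also have "\<dots> = w (n-1) * (\<Sum>j<n. Qmat n p i j)
                  + (\<Sum>k\<in>{1..n-1}. (w (k-1) - w k) * (\<Sum>j<k. Qmat n p i j))"
    by (subst abel_summation_lessThan_Suc) (simp only: n[symmetric])
  finally show ?thesis
    using assms by (simp add: Qmat_row_sum tvec_def qcol_def)
qed

lemma mat_vec_in_vecs: "mat_vec n A w \<in> vecs n"
  by (simp add: vecs_def mat_vec_def)

lemma rat_convex_hull_tvec_subset_vecs: "rat_convex_hull K (tvec n p) \<subseteq> vecs n"
  by (auto simp: rat_convex_hull_def vecs_def tvec_def qcol_def)

lemma braid_face_positive_affine_invariant:
  assumes "braid_face n G" "y \<in> vecs n" "z \<in> vecs n" "(a::rat) > 0"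
    and "\<forall>i<n. z i = a * y i + b"
  shows "z \<in> G \<longleftrightarrow> y \<in> G"
proof -
  obtain x where G: "G = {y \<in> vecs n. braid_equiv n x y}"
    using assms(1) braid_face_def by auto
  have "braid_equiv n x z \<longleftrightarrow> braid_equiv n x y"
    using assms(4,5) by (simp add: braid_equiv_def mult_less_cancel_left_pos)
  then show ?thesis using G assms(2,3) by auto
qed

lemma Wbar_gap_nonneg:
  assumes "w \<in> Wbar n" "k \<in> {1..n-1}"
  shows "w k \<le> w (k-1)"
  using assms by (auto simp: Wbar_def)

lemma Wbar_nonzero_imp_spread_pos:
  assumes w: "w \<in> Wbar n" and "w \<noteq> (\<lambda>_. 0)"
  shows "w (n-1) < w 0"
proof (rule ccontr)
  assume "\<not> w (n-1) < w 0"
  moreover have "w j \<le> w 0" "w (n-1) \<le> w j" if "j < n" for j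
    using w that by (auto simp: Wbar_def)
  ultimately have const: "w j = w 0" if "j < n" for j
    using that by (meson order_antisym order_trans not_less)
  have "of_nat n * w 0 = (\<Sum>i<n. w 0)" by simp
  also have "\<dots> = (\<Sum>i<n. w i)" by (rule sum.cong) (auto intro: const[symmetric])
  also have "\<dots> = 0" using w by (simp add: Wbar_def)
  finally have sum_zero: "of_nat n * w 0 = 0" .
  have "w i = 0" for i
  proof (cases "i < n")
    case True
    then have "w 0 = 0" using sum_zero by simp
    then show ?thesis using const[OF True] by simp
  next
    case False
    then show ?thesis using w by (simp add: Wbar_def vecs_def)
  qed
  with assms(2) show False by auto
qed

lemma centered_antitone_in_Wbar:
  fixes g :: "nat \<Rightarrow> rat"
  assumes "n \<ge> 1" and "\<And>i j. i \<le> j \<Longrightarrow> g j \<le> g i"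
  shows "(\<lambda>j. if j < n then g j - (\<Sum>i<n. g i) / of_nat n else 0) \<in> Wbar n"
proof -
  have "(\<Sum>j<n. g j - (\<Sum>i<n. g i) / of_nat n) = 0"
    using assms(1) by (simp add: sum_subtractf)
  then show ?thesis
    using assms(2) by (auto simp: Wbar_def vecs_def)
qed

lemma Wbar_with_prescribed_gaps:
  assumes "n \<ge> 1" and c_nonneg: "\<forall>k\<in>{1..n-1}. 0 \<le> c k" and c_sum: "(\<Sum>k\<in>{1..n-1}. c k) = 1"
  obtains w where "w \<in> Wbar n" "w \<noteq> (\<lambda>_. 0)" "\<And>k. k \<in> {1..n-1} \<Longrightarrow> w (k-1) - w k = c k"
proof -
  define g where "g j = (\<Sum>k\<in>{1..n-1}. if j < k then c k else 0)" for j
  define w where "w j = (if j < n then g j - (\<Sum>i<n. g i) / of_nat n else 0)" for j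
  have "w \<in> Wbar n"
    unfolding w_def
    by (rule centered_antitone_in_Wbar[OF \<open>n \<ge> 1\<close>])
      (use c_nonneg in \<open>auto simp: g_def intro: sum_mono\<close>)
  moreover have gaps: "w (k-1) - w k = c k" if k: "k \<in> {1..n-1}" for k
  proof -
    have "g (k-1) - g k = (\<Sum>k'\<in>{1..n-1}. if k' = k then c k else 0)"
      unfolding g_def sum_subtractf[symmetric] using k by (intro sum.cong) auto
    moreover have "k - 1 < n" "k < n" using k by auto
    ultimately show ?thesis using k by (simp add: w_def)
  qed
  moreover have "w \<noteq> (\<lambda>_. 0)"
  proof
    assume "w = (\<lambda>_. 0)"
    then have "(\<Sum>k\<in>{1..n-1}. w (k-1) - w k) = 0" by simp
    then show False using gaps c_sum by simp
  qed
  ultimately show ?thesis using that by blast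
qed

lemma results_vector_eq_scaled_hull_point:
  assumes "w \<in> Wbar n" "w \<noteq> (\<lambda>_. 0)"
  obtains a b y where "a > 0" "y \<in> rat_convex_hull {1..n-1} (tvec n p)"
    "\<forall>i<n. mat_vec n (Qmat n p) w i = a * y i + b"
proof -
  define a where "a = w 0 - w (n-1)"
  have a_pos: "a > 0"
    unfolding a_def using Wbar_nonzero_imp_spread_pos[OF assms] by simp
  have a_sum: "a = (\<Sum>k\<in>{1..n-1}. w (k-1) - w k)"
    unfolding a_def by (rule sum_gaps_telescope[symmetric])
  define c where "c k = (w (k-1) - w k) / a" for k
  define y where "y i = (\<Sum>k\<in>{1..n-1}. c k * tvec n p k i)" for i
  have "y \<in> rat_convex_hull {1..n-1} (tvec n p)"
    unfolding rat_convex_hull_def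
  proof (intro CollectI exI conjI)
    show "\<forall>k\<in>{1..n-1}. 0 \<le> c k"
      using Wbar_gap_nonneg[OF assms(1)] a_pos by (simp add: c_def)
    show "(\<Sum>k\<in>{1..n-1}. c k) = 1"
      using a_pos by (simp add: c_def a_sum flip: sum_divide_distrib)
  qed (simp add: y_def fun_eq_iff)
  moreover have "mat_vec n (Qmat n p) w i = a * y i + w (n-1) * (\<Sum>\<sigma>\<in>rankings n. p \<sigma>)"
    if "i < n" for i
    using a_pos mat_vec_Qmat_eq_gap_combination[OF that]
    by (simp add: y_def c_def sum_distrib_left)
  ultimately show ?thesis using a_pos that by blast
qed

lemma hull_point_eq_shifted_results_vector:
  assumes "n \<ge> 1" "y \<in> rat_convex_hull {1..n-1} (tvec n p)"
  obtains w b where "w \<in> Wbar n" "w \<noteq> (\<lambda>_. 0)" "\<forall>i<n. mat_vec n (Qmat n p) w i = y i + b"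
proof -
  obtain c where y: "y = (\<lambda>i. \<Sum>k\<in>{1..n-1}. c k * tvec n p k i)"
    and c: "\<forall>k\<in>{1..n-1}. 0 \<le> c k" "(\<Sum>k\<in>{1..n-1}. c k) = 1"
    using assms(2) unfolding rat_convex_hull_def by blast
  obtain w where w: "w \<in> Wbar n" "w \<noteq> (\<lambda>_. 0)"
    and gaps: "\<And>k. k \<in> {1..n-1} \<Longrightarrow> w (k-1) - w k = c k"
    using Wbar_with_prescribed_gaps[OF assms(1) c] by blast
  have "mat_vec n (Qmat n p) w i = y i + w (n-1) * (\<Sum>\<sigma>\<in>rankings n. p \<sigma>)"
    if "i < n" for i
  proof -
    have "(\<Sum>k\<in>{1..n-1}. (w (k-1) - w k) * tvec n p k i) = y i"
      unfolding y using gaps by (intro sum.cong) auto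
    then show ?thesis by (simp add: mat_vec_Qmat_eq_gap_combination[OF that])
  qed
  with w that show ?thesis by blast
qed

theorem theorem4p2:
  fixes n :: nat and p :: "(nat \<Rightarrow> nat) \<Rightarrow> rat" and G :: "(nat \<Rightarrow> rat) set"
  assumes "n \<ge> 3" and "braid_face n G"
  shows "possible_outcome n p G \<longleftrightarrow> G \<inter> rat_convex_hull {1..n-1} (tvec n p) \<noteq> {}"
proof
  assume "possible_outcome n p G"
  then obtain w where w: "w \<in> Wbar n" "w \<noteq> (\<lambda>_. 0)" "mat_vec n (Qmat n p) w \<in> G"
    unfolding possible_outcome_def by auto
  obtain a b y where "a > 0" and y: "y \<in> rat_convex_hull {1..n-1} (tvec n p)"
    and "\<forall>i<n. mat_vec n (Qmat n p) w i = a * y i + b"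
    using results_vector_eq_scaled_hull_point[OF w(1,2)] .
  moreover have "y \<in> vecs n"
    using y rat_convex_hull_tvec_subset_vecs by blast
  ultimately have "y \<in> G"
    using braid_face_positive_affine_invariant[OF assms(2) _ mat_vec_in_vecs] w(3) by blast
  with y show "G \<inter> rat_convex_hull {1..n-1} (tvec n p) \<noteq> {}" by blast
next
  assume "G \<inter> rat_convex_hull {1..n-1} (tvec n p) \<noteq> {}"
  then obtain y where "y \<in> G" and y: "y \<in> rat_convex_hull {1..n-1} (tvec n p)" by blast
  have "n \<ge> 1" using assms(1) by simp
  then obtain w b where w: "w \<in> Wbar n" "w \<noteq> (\<lambda>_. 0)"
    and "\<forall>i<n. mat_vec n (Qmat n p) w i = y i + b"
    using hull_point_eq_shifted_results_vector[OF _ y] by blast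
  moreover have "y \<in> vecs n"
    using y rat_convex_hull_tvec_subset_vecs by blast
  ultimately have "mat_vec n (Qmat n p) w \<in> G"
    using braid_face_positive_affine_invariant[OF assms(2) _ mat_vec_in_vecs, of y 1] \<open>y \<in> G\<close>
    by simp
  with w show "possible_outcome n p G" unfolding possible_outcome_def by blast
qed

end
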